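(* Let $Q$ be a Jordan loop and $x\in Q$. Then for all integers $n\ge 0$: (i) $x^n x^2=x^{n+2}$; (ii) $x^n x^4=x^{n+4}$; (iii) $x^n x^8=x^{n+8}$ whenever $n\not\equiv 3 \pmod 4$; moreover, if $x^3x^8=x^{11}$, then $x^nx^8=x^{n+8}$ for all $n\ge 0$; (iv) for integers $k\ge 1$, $x^n x^{2^k}=x^{n+2^k}$ whenever $n\equiv 2^m \pmod{2^{k-1}}$ for some integer $m$ with $0\le m\le k-1$; (v) for integers $n\ge 1$, $x^{2^n}=(x^{2^{n-1}})^2$.
   Context: A loop is a set $Q$ with a binary operation (juxtaposition) and neutral element $e$ such that for all $a,b$ the equations $ax=b$, $ya=b$ have unique solutions. A Jordan loop is a commutative loop satisfying $x^2(yx)=(x^2y)x$. For $k\ge 0$, $x^k$ denotes the right-associated product $x(x(\cdots(xe)\cdots))$ with $k$ factors $x$ (so $x^0=e$, $x^1=x$). For an element $y$, $y^2=yy$. *)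

theory Defs
  imports Main
begin

definition loop :: "('a \<Rightarrow> 'a \<Rightarrow> 'a) \<Rightarrow> 'a \<Rightarrow> bool" where
  "loop m e \<longleftrightarrow> (\<forall>a. m e a = a \<and> m a e = a)
     \<and> (\<forall>a b. \<exists>!x. m a x = b) \<and> (\<forall>a b. \<exists>!y. m y a = b)"

definition jordan_loop :: "('a \<Rightarrow> 'a \<Rightarrow> 'a) \<Rightarrow> 'a \<Rightarrow> bool" where
  "jordan_loop m e \<longleftrightarrow> loop m e \<and> (\<forall>x y. m x y = m y x)
     \<and> (\<forall>x y. m (m x x) (m y x) = m (m (m x x) y) x)"

definition lpow :: "('a \<Rightarrow> 'a \<Rightarrow> 'a) \<Rightarrow> 'a \<Rightarrow> 'a \<Rightarrow> nat \<Rightarrow> 'a" where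
  "lpow m e x k = (m x ^^ k) e"

end

theory Submission
  imports Defs
begin

text \<open>
  By the Jordan identity, left multiplication by \<open>a a\<close> commutes with left multiplication
  by \<open>a\<close>. Take \<open>a = x^d\<close> with \<open>x^d x^d = x^(2d)\<close>. If \<open>x^u x^d = x^(u+d)\<close> holds along the
  residue class of \<open>n\<close> modulo \<open>d\<close>, then \<open>x^n\<close> arises from \<open>x^r\<close>, \<open>r = n mod d\<close>, by repeated left
  multiplication by \<open>x^d\<close>, so \<open>x^n x^(2d) = x^(n+2d)\<close> reduces to the single instance
  \<open>x^r x^(2d) = x^(r+2d)\<close>. Iterating this doubling step with \<open>d = 2^j\<close> proves the power-of-two
  statements by induction; the remaining instance at \<open>r = 2^i\<close>, \<open>i < j\<close>, is by commutativity an
  earlier case of the induction.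
\<close>

lemma lpow_0 [simp]: "lpow m e x 0 = e"
  by (simp add: lpow_def)

lemma lpow_Suc [simp]: "lpow m e x (Suc n) = m x (lpow m e x n)"
  by (simp add: lpow_def)

definition pow2_residue :: "nat \<Rightarrow> nat \<Rightarrow> bool" where
  "pow2_residue k n \<longleftrightarrow> (\<exists>j. j \<le> k - 1 \<and> n mod 2 ^ (k - 1) = 2 ^ j mod 2 ^ (k - 1))"

lemma pow2_residue_Suc_iff:
  "pow2_residue (Suc j) n \<longleftrightarrow> n mod 2 ^ j = 0 \<or> (\<exists>i<j. n mod 2 ^ j = 2 ^ i)"
proof
  assume "pow2_residue (Suc j) n"
  then obtain i where "i \<le> j" "n mod 2 ^ j = 2 ^ i mod 2 ^ j"
    by (auto simp: pow2_residue_def)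
  then show "n mod 2 ^ j = 0 \<or> (\<exists>i<j. n mod 2 ^ j = 2 ^ i)"
    by (cases "i = j") auto
next
  assume "n mod 2 ^ j = 0 \<or> (\<exists>i<j. n mod 2 ^ j = 2 ^ i)"
  then show "pow2_residue (Suc j) n"
    unfolding pow2_residue_def by (auto intro: exI[of _ j] less_imp_le)
qed

lemma pow2_residue_if_dvd: "2 ^ (k - 1) dvd n \<Longrightarrow> pow2_residue k n"
  unfolding pow2_residue_def by (intro exI[of _ "k - 1"]) simp

lemma pow2_residue_pow2: "i \<le> k \<Longrightarrow> pow2_residue i (2 ^ k)"
  by (rule pow2_residue_if_dvd) (simp add: le_imp_power_dvd)

lemma pow2_residue_1: "pow2_residue 1 n"
  by (simp add: pow2_residue_def)

lemma pow2_residue_2: "pow2_residue 2 n"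
proof -
  have "n mod 2 = 0 \<or> n mod 2 = 2 ^ 0"
    by auto
  then show ?thesis
    unfolding numeral_2_eq_2 pow2_residue_Suc_iff by auto
qed

lemma pow2_residue_3: "n mod 4 \<noteq> 3 \<Longrightarrow> pow2_residue 3 n"
proof -
  assume "n mod 4 \<noteq> 3"
  then have "n mod 4 = 0 \<or> n mod 4 = 2 ^ 0 \<or> n mod 4 = 2 ^ 1"
    by auto
  then show ?thesis
    unfolding numeral_3_eq_3 pow2_residue_Suc_iff by (auto simp: numeral_2_eq_2)
qed

lemma pow2_residue_Suc_congD:
  assumes "pow2_residue (Suc j) n" and "u mod 2 ^ j = n mod 2 ^ j"
  shows "pow2_residue j u"
proof -
  have dvd: "(2::nat) ^ (j - 1) dvd 2 ^ j"
    by (simp add: le_imp_power_dvd)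
  obtain i where "i \<le> j" "n mod 2 ^ j = 2 ^ i mod 2 ^ j"
    using assms(1) by (auto simp: pow2_residue_def)
  then have u: "u mod 2 ^ (j - 1) = 2 ^ i mod 2 ^ (j - 1)"
    by (metis assms(2) dvd mod_mod_cancel)
  show ?thesis
  proof (cases "i = j")
    case True
    with u dvd show ?thesis
      unfolding pow2_residue_def by (intro exI[of _ "j - 1"]) simp
  next
    case False
    with u \<open>i \<le> j\<close> show ?thesis
      unfolding pow2_residue_def by (intro exI[of _ i]) simp
  qed
qed

locale jordan_loop_ops =
  fixes mult :: "'a \<Rightarrow> 'a \<Rightarrow> 'a" (infixl "\<cdot>" 70) and e :: 'a
  assumes jordan: "jordan_loop (\<cdot>) e"
begin

abbreviation pw :: "'a \<Rightarrow> nat \<Rightarrow> 'a" where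
  "pw \<equiv> lpow (\<cdot>) e"

lemma commute: "a \<cdot> b = b \<cdot> a"
  using jordan unfolding jordan_loop_def by blast

lemma left_neutral [simp]: "e \<cdot> a = a"
  using jordan unfolding jordan_loop_def loop_def by blast

lemma right_neutral [simp]: "a \<cdot> e = a"
  using jordan unfolding jordan_loop_def loop_def by blast

lemma square_mult_left_commute: "(a \<cdot> a) \<cdot> (a \<cdot> y) = a \<cdot> ((a \<cdot> a) \<cdot> y)"
proof -
  have "(a \<cdot> a) \<cdot> (y \<cdot> a) = ((a \<cdot> a) \<cdot> y) \<cdot> a"
    using jordan unfolding jordan_loop_def by blast
  then show ?thesis
    by (metis commute)
qed

lemma square_mult_funpow_commute: "(a \<cdot> a) \<cdot> (((\<cdot>) a ^^ i) y) = ((\<cdot>) a ^^ i) ((a \<cdot> a) \<cdot> y)"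
  by (induction i) (simp_all add: square_mult_left_commute)

lemma pw_mult_commute_iff: "pw x n \<cdot> pw x d = pw x (n + d) \<longleftrightarrow> pw x d \<cdot> pw x n = pw x (d + n)"
  by (simp add: commute add.commute)

lemma pw_progression:
  assumes "\<forall>t. pw x (s + t * d) \<cdot> pw x d = pw x (s + t * d + d)"
  shows "pw x (s + i * d) = ((\<cdot>) (pw x d) ^^ i) (pw x s)"
proof (induction i)
  case 0
  show ?case by simp
next
  case (Suc i)
  have "pw x (s + Suc i * d) = pw x (s + i * d) \<cdot> pw x d"
    using assms[rule_format, of i] by (simp add: algebra_simps)
  with Suc show ?case
    by (simp add: commute)
qed

lemma pw_doubling_step:
  assumes square: "pw x d \<cdot> pw x d = pw x (2 * d)"
    and cls: "\<forall>u. u mod d = n mod d \<longrightarrow> pw x u \<cdot> pw x d = pw x (u + d)"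
    and base: "pw x (n mod d) \<cdot> pw x (2 * d) = pw x (n mod d + 2 * d)"
  shows "pw x n \<cdot> pw x (2 * d) = pw x (n + 2 * d)"
proof -
  define r where "r = n mod d"
  define q where "q = n div d"
  define L where "L = (\<cdot>) (pw x d) ^^ q"
  have n: "n = r + q * d"
    unfolding r_def q_def by simp
  have "(r + t * d) mod d = n mod d" "(r + 2 * d + t * d) mod d = n mod d" for t
    unfolding r_def by (simp_all add: mult.commute[of 2] flip: add_mult_distrib)
  then have "pw x n = L (pw x r)" and shift: "pw x (r + 2 * d + q * d) = L (pw x (r + 2 * d))"
    using pw_progression[of x r d q] pw_progression[of x "r + 2 * d" d q] cls
    by (simp_all add: n L_def)
  then have "pw x n \<cdot> pw x (2 * d) = (pw x d \<cdot> pw x d) \<cdot> L (pw x r)"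
    by (simp add: square commute)
  also have "\<dots> = L ((pw x d \<cdot> pw x d) \<cdot> pw x r)"
    unfolding L_def by (rule square_mult_funpow_commute)
  also have "\<dots> = L (pw x (r + 2 * d))"
    using base square by (simp add: r_def commute)
  finally show ?thesis
    using shift by (simp add: n algebra_simps)
qed

theorem pw_mult_pow2:
  "pow2_residue k n \<Longrightarrow> pw x n \<cdot> pw x (2 ^ k) = pw x (n + 2 ^ k)"
proof (induction k arbitrary: n rule: less_induct)
  case (less k)
  show ?case
  proof (cases k)
    case 0
    then show ?thesis by (simp add: commute)
  next
    case (Suc j)
    have IH: "\<And>i u. i \<le> j \<Longrightarrow> pow2_residue i u \<Longrightarrow> pw x u \<cdot> pw x (2 ^ i) = pw x (u + 2 ^ i)"
      using less.IH Suc by simp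
    have square: "pw x (2 ^ j) \<cdot> pw x (2 ^ j) = pw x (2 * 2 ^ j)"
      using IH[of j "2 ^ j"] pow2_residue_pow2 by (simp add: mult_2)
    have cls: "\<forall>u. u mod 2 ^ j = n mod 2 ^ j \<longrightarrow> pw x u \<cdot> pw x (2 ^ j) = pw x (u + 2 ^ j)"
      using IH pow2_residue_Suc_congD less.prems Suc by blast
    have base: "pw x (n mod 2 ^ j) \<cdot> pw x (2 * 2 ^ j) = pw x (n mod 2 ^ j + 2 * 2 ^ j)"
      using less.prems unfolding Suc pow2_residue_Suc_iff
    proof (elim disjE exE conjE)
      fix i assume "i < j" and r: "n mod 2 ^ j = 2 ^ i"
      then have "pw x (2 ^ Suc j) \<cdot> pw x (2 ^ i) = pw x (2 ^ Suc j + 2 ^ i)"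
        using IH[of i "2 ^ Suc j"] pow2_residue_pow2[of i "Suc j"] by simp
      then show ?thesis
        unfolding r by (simp add: pw_mult_commute_iff)
    qed (simp add: commute)
    show ?thesis
      using pw_doubling_step[OF square cls base] Suc by simp
  qed
qed

corollary pw_pow2_Suc: "pw x (2 ^ Suc j) = pw x (2 ^ j) \<cdot> pw x (2 ^ j)"
  using pw_mult_pow2[of j "2 ^ j"] pow2_residue_pow2 by (simp add: mult_2)

end

theorem lemma2p2:
  fixes m :: "'a \<Rightarrow> 'a \<Rightarrow> 'a" and e x :: 'a
  assumes "jordan_loop m e"
  shows "(\<forall>n. m (lpow m e x n) (lpow m e x 2) = lpow m e x (n + 2))
    \<and> (\<forall>n. m (lpow m e x n) (lpow m e x 4) = lpow m e x (n + 4))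
    \<and> (\<forall>n. n mod 4 \<noteq> 3 \<longrightarrow> m (lpow m e x n) (lpow m e x 8) = lpow m e x (n + 8))
    \<and> (m (lpow m e x 3) (lpow m e x 8) = lpow m e x 11 \<longrightarrow>
         (\<forall>n. m (lpow m e x n) (lpow m e x 8) = lpow m e x (n + 8)))
    \<and> (\<forall>k n. k \<ge> 1 \<longrightarrow> (\<exists>j. j \<le> k - 1 \<and> n mod 2 ^ (k - 1) = 2 ^ j mod 2 ^ (k - 1)) \<longrightarrow>
         m (lpow m e x n) (lpow m e x (2 ^ k)) = lpow m e x (n + 2 ^ k))
    \<and> (\<forall>n. n \<ge> 1 \<longrightarrow> lpow m e x (2 ^ n) = m (lpow m e x (2 ^ (n - 1))) (lpow m e x (2 ^ (n - 1))))"
proof -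
  interpret jordan_loop_ops m e by unfold_locales (fact assms)
  have pow2: "pow2_residue k n \<Longrightarrow> m (lpow m e x n) (lpow m e x (2 ^ k)) = lpow m e x (n + 2 ^ k)"
    for k n using pw_mult_pow2 .
  have two: "m (lpow m e x n) (lpow m e x 2) = lpow m e x (n + 2)" for n
    using pow2[OF pow2_residue_1] by (simp only: power_one_right)
  have four: "m (lpow m e x n) (lpow m e x 4) = lpow m e x (n + 4)" for n
    using pow2[OF pow2_residue_2] by simp
  have eight: "m (lpow m e x n) (lpow m e x 8) = lpow m e x (n + 8)" if "n mod 4 \<noteq> 3" for n
    using pow2[OF pow2_residue_3[OF that]] by simp
  have eight_all: "m (lpow m e x n) (lpow m e x 8) = lpow m e x (n + 8)"
    if "m (lpow m e x 3) (lpow m e x 8) = lpow m e x 11" for n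
    using pw_doubling_step[of x 4 n] four that eight[of "n mod 4"]
    by (cases "n mod 4 = 3") simp_all
  have squares: "lpow m e x (2 ^ n) = m (lpow m e x (2 ^ (n - 1))) (lpow m e x (2 ^ (n - 1)))"
    if "n \<ge> 1" for n
    using pw_pow2_Suc[of x "n - 1"] that by simp
  show ?thesis
    using two four eight eight_all pow2 squares unfolding pow2_residue_def by blast
qed

end
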